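(* Let $\Lambda$ be a tree with distinguished root vertex $\lambda$, and let $r\ge 3$ be an integer. If $2\le\deg(\lambda)\le r-1$ and all other vertices of $\Lambda$ have degree at least $3$, then there is a perimeter $P$ of radius at most $r$ and a function $d:P\to\mathbb{N}^+$ satisfying $d(p)\le\deg(p)-1$ for all $p\in P$ and $\sum_{p\in P}d(p)=r$.
   Context: On the vertex set of a rooted tree $(\Lambda,\lambda)$ define the partial order $u\prec v$ iff the unique shortest path from $\lambda$ to $v$ passes through $u$. A finite set $P\subseteq V(\Lambda)$ is a perimeter if $P\ne\{\lambda\}$ and: (i) there is a constant $R$ such that every vertex $u$ with $d(u,\lambda)\ge R$ has some $p\in P$ with $p\prec u$; (ii) if $p,p'\in P$ and $p\prec p'$ then $p=p'$. The radius of $P$ is the smallest $R$ satisfying (i). Here $d$ denotes the path-length metric and $\mathbb{N}^+$ the positive integers. *)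

theory Defs
  imports Main "HOL-Library.Extended_Nat"
begin

definition walk :: "'a set \<Rightarrow> ('a \<Rightarrow> 'a \<Rightarrow> bool) \<Rightarrow> 'a list \<Rightarrow> bool" where
  "walk V E xs \<longleftrightarrow> xs \<noteq> [] \<and> set xs \<subseteq> V \<and> successively E xs"

definition is_cycle :: "'a set \<Rightarrow> ('a \<Rightarrow> 'a \<Rightarrow> bool) \<Rightarrow> 'a list \<Rightarrow> bool" where
  "is_cycle V E xs \<longleftrightarrow> walk V E xs \<and> distinct xs \<and> length xs \<ge> 3 \<and> E (last xs) (hd xs)"

definition is_tree :: "'a set \<Rightarrow> ('a \<Rightarrow> 'a \<Rightarrow> bool) \<Rightarrow> bool" where
  "is_tree V E \<longleftrightarrow> V \<noteq> {}
     \<and> (\<forall>u v. E u v \<longrightarrow> u \<in> V \<and> v \<in> V)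
     \<and> (\<forall>u v. E u v \<longrightarrow> E v u)
     \<and> (\<forall>u. \<not> E u u)
     \<and> (\<forall>u\<in>V. \<forall>v\<in>V. \<exists>xs. walk V E xs \<and> hd xs = u \<and> last xs = v)
     \<and> (\<forall>xs. \<not> is_cycle V E xs)"

definition gdist :: "'a set \<Rightarrow> ('a \<Rightarrow> 'a \<Rightarrow> bool) \<Rightarrow> 'a \<Rightarrow> 'a \<Rightarrow> nat" where
  "gdist V E u v = (LEAST n. \<exists>xs. walk V E xs \<and> hd xs = u \<and> last xs = v \<and> length xs = Suc n)"

definition degree :: "'a set \<Rightarrow> ('a \<Rightarrow> 'a \<Rightarrow> bool) \<Rightarrow> 'a \<Rightarrow> enat" where
  "degree V E v = (if finite {u\<in>V. E v u} then enat (card {u\<in>V. E v u}) else \<infinity>)"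

definition tree_prec :: "'a set \<Rightarrow> ('a \<Rightarrow> 'a \<Rightarrow> bool) \<Rightarrow> 'a \<Rightarrow> 'a \<Rightarrow> 'a \<Rightarrow> bool" where
  "tree_prec V E rt u v \<longleftrightarrow>
     (\<exists>xs. walk V E xs \<and> hd xs = rt \<and> last xs = v
        \<and> length xs = Suc (gdist V E rt v) \<and> u \<in> set xs)"

definition covers :: "'a set \<Rightarrow> ('a \<Rightarrow> 'a \<Rightarrow> bool) \<Rightarrow> 'a \<Rightarrow> 'a set \<Rightarrow> nat \<Rightarrow> bool" where
  "covers V E rt P R \<longleftrightarrow>
     (\<forall>u\<in>V. gdist V E u rt \<ge> R \<longrightarrow> (\<exists>p\<in>P. tree_prec V E rt p u))"

definition perimeter :: "'a set \<Rightarrow> ('a \<Rightarrow> 'a \<Rightarrow> bool) \<Rightarrow> 'a \<Rightarrow> 'a set \<Rightarrow> bool" where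
  "perimeter V E rt P \<longleftrightarrow> finite P \<and> P \<subseteq> V \<and> P \<noteq> {rt}
     \<and> (\<exists>R. covers V E rt P R)
     \<and> (\<forall>p\<in>P. \<forall>p'\<in>P. tree_prec V E rt p p' \<longrightarrow> p = p')"

definition perimeter_radius :: "'a set \<Rightarrow> ('a \<Rightarrow> 'a \<Rightarrow> bool) \<Rightarrow> 'a \<Rightarrow> 'a set \<Rightarrow> nat" where
  "perimeter_radius V E rt P = (LEAST R. covers V E rt P R)"

end

theory Submission
  imports Defs
begin

text \<open>
  Sort the vertices into levels by their distance from the root. Since paths in a tree are unique,
  every vertex of level k \<ge> 1 has exactly one neighbour in level k - 1 and all its other
  neighbours, its children, in level k + 1, and different vertices have disjoint sets of children.
  So level 1 has deg \<lambda> \<le> r - 1 vertices and, every other vertex having at least two children,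
  the levels at least double in size. Let j be the last level with at most r vertices; then j < r,
  and level j is a perimeter of radius at most j. Choose r vertices of level j + 1 containing a child
  of every vertex of level j, and let d(p) count the chosen children of p.
\<close>

lemma walk_take: "walk V E xs \<Longrightarrow> 0 < n \<Longrightarrow> walk V E (take n xs)"
  unfolding walk_def
  by (metis append_take_drop_id successively_append_iff set_take_subset subset_trans take_eq_Nil
      not_gr_zero)

lemma walk_drop: "walk V E xs \<Longrightarrow> n < length xs \<Longrightarrow> walk V E (drop n xs)"
  unfolding walk_def
  by (metis append_take_drop_id successively_append_iff set_drop_subset subset_trans drop_eq_Nil
      not_le)

lemma walk_join: "walk V E xs \<Longrightarrow> walk V E ys \<Longrightarrow> last xs = hd ys \<Longrightarrow> walk V E (xs @ tl ys)"
  unfolding walk_def by (cases ys) (auto simp: successively_append_iff successively_Cons)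

lemma last_append_tl: "xs \<noteq> [] \<Longrightarrow> ys \<noteq> [] \<Longrightarrow> last xs = hd ys \<Longrightarrow> last (xs @ tl ys) = last ys"
  by (cases ys) auto

lemma gdist_le: "walk V E xs \<Longrightarrow> length xs = Suc n \<Longrightarrow> gdist V E (hd xs) (last xs) \<le> n"
  unfolding gdist_def by (rule Least_le) blast

lemma shortest_walk_distinct:
  assumes walk: "walk V E xs" and shortest: "length xs = Suc (gdist V E (hd xs) (last xs))"
  shows "distinct xs"
proof (rule ccontr)
  assume "\<not> distinct xs"
  then obtain i k where ik: "i < k" "k < length xs" "xs ! i = xs ! k"
    by (metis distinct_conv_nth linorder_neqE_nat)
  define ys where "ys = take (Suc i) xs @ tl (drop k xs)"
  have last_take: "last (take (Suc i) xs) = hd (drop k xs)"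
    using ik by (simp add: take_Suc_conv_app_nth hd_drop_conv_nth)
  have "xs \<noteq> []" using ik by auto
  have "walk V E ys"
    unfolding ys_def using walk ik last_take by (intro walk_join walk_take walk_drop) auto
  moreover have "hd ys = hd xs" "last ys = last xs"
    using \<open>xs \<noteq> []\<close> ik last_append_tl[OF _ _ last_take] unfolding ys_def by simp_all
  moreover have "length ys = Suc (i + (length xs - Suc k))"
    unfolding ys_def using ik by simp
  ultimately have "gdist V E (hd xs) (last xs) \<le> i + (length xs - Suc k)"
    by (metis gdist_le)
  with shortest ik show False by simp
qed

lemma exists_first_nth_in:
  "set xs \<inter> A \<noteq> {} \<Longrightarrow> \<exists>k < length xs. xs ! k \<in> A \<and> set (take k xs) \<inter> A = {}"
proof (induction xs)
  case (Cons x xs)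
  show ?case
  proof (cases "x \<in> A")
    case False
    with Cons obtain k where "k < length xs" "xs ! k \<in> A" "set (take k xs) \<inter> A = {}" by auto
    with False show ?thesis by (intro exI[of _ "Suc k"]) auto
  qed auto
qed simp

lemma exists_superset_with_card:
  assumes "finite G" "G \<subseteq> A" "card G \<le> n" "infinite A \<or> n \<le> card A"
  shows "\<exists>F. G \<subseteq> F \<and> F \<subseteq> A \<and> finite F \<and> card F = n"
proof -
  have "\<exists>H. H \<subseteq> A - G \<and> finite H \<and> card H = n - card G"
  proof (cases "finite A")
    case False
    then have "infinite (A - G)" using assms(1) by (rule Diff_infinite_finite[rotated])
    then show ?thesis using infinite_arbitrarily_large by blast
  next
    case True
    then have "n - card G \<le> card (A - G)" using assms by (simp add: card_Diff_subset)
    then obtain H where "H \<subseteq> A - G" "card H = n - card G" "finite H"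
      by (rule obtain_subset_with_card_n)
    then show ?thesis by blast
  qed
  then obtain H where "H \<subseteq> A - G" "finite H" "card H = n - card G" by blast
  then show ?thesis using assms(1-3) card_Un_disjoint[of G H]
    by (intro exI[of _ "G \<union> H"]) auto
qed

locale tree =
  fixes V :: "'a set" and E :: "'a \<Rightarrow> 'a \<Rightarrow> bool"
  assumes is_tree: "is_tree V E"
begin

lemma edge_in_V: "E u v \<Longrightarrow> u \<in> V \<and> v \<in> V"
  and edge_sym: "E u v \<Longrightarrow> E v u"
  and edge_irrefl: "\<not> E u u"
  and connected: "u \<in> V \<Longrightarrow> v \<in> V \<Longrightarrow> \<exists>xs. walk V E xs \<and> hd xs = u \<and> last xs = v"
  and no_cycle: "\<not> is_cycle V E xs"
  using is_tree unfolding is_tree_def by blast+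

lemma walk_rev: "walk V E xs \<Longrightarrow> walk V E (rev xs)"
  unfolding walk_def by (auto simp: successively_rev intro: successively_mono edge_sym)

lemma exists_shortest_path:
  assumes "u \<in> V" "v \<in> V"
  shows "\<exists>xs. walk V E xs \<and> distinct xs \<and> hd xs = u \<and> last xs = v
               \<and> length xs = Suc (gdist V E u v)"
proof -
  obtain xs where "walk V E xs" "hd xs = u" "last xs = v" using connected assms by blast
  then have "\<exists>n xs. walk V E xs \<and> hd xs = u \<and> last xs = v \<and> length xs = Suc n"
    unfolding walk_def by (metis Suc_pred length_greater_0_conv)
  then have "\<exists>xs. walk V E xs \<and> hd xs = u \<and> last xs = v \<and> length xs = Suc (gdist V E u v)"
    unfolding gdist_def by (rule LeastI_ex)
  then show ?thesis using shortest_walk_distinct by metis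
qed

lemma diverging_paths_disjoint:
  assumes walk_as: "walk V E (a # as)" and walk_bs: "walk V E (a # bs)"
    and dist_as: "distinct (a # as)" and dist_bs: "distinct (a # bs)" and diverge: "hd as \<noteq> hd bs"
  shows "set bs \<inter> set as = {}"
proof (rule ccontr)
  assume meet: "set bs \<inter> set as \<noteq> {}"
  then have "as \<noteq> []" "bs \<noteq> []" by auto
  obtain k where k: "k < length bs" "bs ! k \<in> set as" and avoid: "set (take k bs) \<inter> set as = {}"
    using exists_first_nth_in[OF meet] by blast
  obtain i where i: "i < length as" "as ! i = bs ! k" using k(2) by (metis in_set_conv_nth)
  define outward where "outward = take (Suc (Suc i)) (a # as)"
  define inward where "inward = rev (take (Suc k) bs)"
  define c where "c = outward @ tl inward"
  have last_out: "last outward = hd inward"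
    unfolding outward_def inward_def using i k by (simp add: take_Suc_conv_app_nth hd_rev)
  have tl_in: "tl inward = rev (take k bs)"
    unfolding inward_def using k by (simp add: take_Suc_conv_app_nth)
  have "walk V E bs" using walk_drop[OF walk_bs, of 1] \<open>bs \<noteq> []\<close> by simp
  then have "walk V E c"
    using walk_join[OF walk_take[OF walk_as] walk_rev[OF walk_take], of "Suc (Suc i)" bs "Suc k"]
      last_out
    unfolding c_def outward_def inward_def by simp
  moreover have "distinct c"
    unfolding c_def tl_in outward_def using dist_as dist_bs avoid
    by (auto dest: in_set_takeD)
  moreover have "length c \<ge> 3"
  proof -
    have "k = 0 \<Longrightarrow> i \<noteq> 0" using i diverge \<open>as \<noteq> []\<close> \<open>bs \<noteq> []\<close> by (metis hd_conv_nth)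
    then show ?thesis unfolding c_def tl_in outward_def using i k by (cases k) auto
  qed
  moreover have "E (last c) (hd c)"
  proof -
    have "last c = hd bs"
      unfolding c_def using last_append_tl[OF _ _ last_out] \<open>bs \<noteq> []\<close>
      by (simp add: outward_def inward_def last_rev hd_take)
    then show ?thesis
      using walk_bs \<open>bs \<noteq> []\<close> edge_sym unfolding c_def outward_def walk_def
      by (cases bs) auto
  qed
  ultimately show False using no_cycle unfolding is_cycle_def by blast
qed

lemma path_unique:
  "walk V E xs \<Longrightarrow> distinct xs \<Longrightarrow> walk V E ys \<Longrightarrow> distinct ys \<Longrightarrow> hd xs = hd ys
   \<Longrightarrow> last xs = last ys \<Longrightarrow> xs = ys"
proof (induction xs arbitrary: ys)
  case Nil
  then show ?case unfolding walk_def by simp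
next
  case (Cons a as)
  then obtain bs where ys: "ys = a # bs" unfolding walk_def by (cases ys) auto
  consider "as = []" | "bs = []" | "as \<noteq> []" "bs \<noteq> []" by blast
  then show ?case
  proof cases
    case 1
    then show ?thesis using Cons.prems ys by (metis distinct.simps(2) last.simps last_in_set)
  next
    case 2
    then show ?thesis using Cons.prems ys by (metis distinct.simps(2) last.simps last_in_set)
  next
    case 3
    have walks: "walk V E as" "walk V E bs"
      using walk_drop[OF Cons.prems(1), of 1] walk_drop[OF Cons.prems(3), of 1] 3 ys by auto
    have "last bs \<in> set bs \<inter> set as" using Cons.prems ys 3 by (metis IntI last.simps last_in_set)
    then have "hd as = hd bs" using diverging_paths_disjoint Cons.prems ys by blast
    then show ?thesis using Cons.IH[OF walks(1) _ walks(2)] Cons.prems ys 3 by simp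
  qed
qed

lemma path_length_gdist:
  assumes "walk V E xs" "distinct xs"
  shows "length xs = Suc (gdist V E (hd xs) (last xs))"
proof -
  have "hd xs \<in> V" "last xs \<in> V" using assms unfolding walk_def by auto
  then obtain ys where ys: "walk V E ys" "distinct ys" "hd ys = hd xs" "last ys = last xs"
      "length ys = Suc (gdist V E (hd xs) (last xs))"
    using exists_shortest_path by blast
  then show ?thesis using path_unique[OF assms ys(1,2)] by simp
qed

lemma gdist_path_nth:
  assumes "walk V E xs" "distinct xs" "i < length xs"
  shows "gdist V E (hd xs) (xs ! i) = i"
proof -
  have "last (take (Suc i) xs) = xs ! i" using assms(3) by (simp add: take_Suc_conv_app_nth)
  then show ?thesis
    using path_length_gdist[of "take (Suc i) xs"] walk_take[OF assms(1)] assms by simp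
qed

lemma path_snoc:
  "walk V E xs \<Longrightarrow> distinct xs \<Longrightarrow> E (last xs) q \<Longrightarrow> q \<notin> set xs
   \<Longrightarrow> walk V E (xs @ [q]) \<and> distinct (xs @ [q])"
  using edge_in_V unfolding walk_def by (auto simp: successively_append_iff)

lemma gdist_commute:
  assumes "u \<in> V" "v \<in> V"
  shows "gdist V E u v = gdist V E v u"
proof -
  obtain xs where "walk V E xs" "distinct xs" "hd xs = u" "last xs = v"
      "length xs = Suc (gdist V E u v)"
    using exists_shortest_path assms by blast
  then show ?thesis using path_length_gdist[of "rev xs"] walk_rev by (simp add: hd_rev last_rev)
qed

end

locale rooted_tree = tree +
  fixes rt :: 'a
  assumes root_in_V: "rt \<in> V"
begin

definition neighbors :: "'a \<Rightarrow> 'a set" where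
  "neighbors v = {u \<in> V. E v u}"

definition level :: "nat \<Rightarrow> 'a set" where
  "level k = {v \<in> V. gdist V E rt v = k}"

definition children :: "'a \<Rightarrow> 'a set" where
  "children p = neighbors p \<inter> level (Suc (gdist V E rt p))"

lemma root_path_nth_in_level:
  assumes "walk V E xs" "distinct xs" "hd xs = rt" "i < length xs"
  shows "xs ! i \<in> level i"
  using gdist_path_nth[OF assms(1,2,4)] assms unfolding level_def walk_def by auto

lemma root_path_level_last:
  assumes "walk V E xs" "distinct xs" "hd xs = rt"
  shows "last xs \<in> level (length xs - 1)"
  using path_length_gdist[OF assms(1,2)] assms unfolding level_def walk_def by auto

lemma exists_root_path:
  assumes "v \<in> level k"
  obtains xs where "walk V E xs" "distinct xs" "hd xs = rt" "last xs = v" "length xs = Suc k"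
  using exists_shortest_path[OF root_in_V, of v] assms unfolding level_def by auto

lemma level_0: "level 0 = {rt}"
proof -
  have "v = rt" if "v \<in> level 0" for v
    using that by (rule exists_root_path) (auto simp: length_Suc_conv)
  moreover have "rt \<in> level 0"
    using root_path_level_last[of "[rt]"] root_in_V by (simp add: walk_def)
  ultimately show ?thesis by blast
qed

lemma root_notin_level: "0 < k \<Longrightarrow> rt \<notin> level k"
  using level_0 unfolding level_def by auto

lemma level_1: "level 1 = neighbors rt"
proof
  show "level 1 \<subseteq> neighbors rt"
  proof
    fix v assume "v \<in> level 1"
    then obtain xs where "walk V E xs" "hd xs = rt" "last xs = v" "length xs = 2"
      by (rule exists_root_path) auto
    then show "v \<in> neighbors rt"
      unfolding neighbors_def walk_def by (auto simp: numeral_2_eq_2 length_Suc_conv)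
  qed
next
  show "neighbors rt \<subseteq> level 1"
  proof
    fix v assume "v \<in> neighbors rt"
    then have "walk V E [rt, v]" "distinct [rt, v]"
      using root_in_V edge_irrefl unfolding neighbors_def walk_def by auto
    then show "v \<in> level 1" using root_path_level_last by fastforce
  qed
qed

lemma parent_exists:
  assumes "q \<in> level (Suc j)"
  shows "\<exists>p \<in> level j. E p q"
proof -
  obtain xs where xs: "walk V E xs" "distinct xs" "hd xs = rt" "last xs = q" "length xs = Suc (Suc j)"
    using assms by (rule exists_root_path)
  then have "E (xs ! j) (xs ! Suc j)" "xs ! Suc j = q"
    unfolding walk_def by (auto simp: successively_nth last_conv_nth)
  then show ?thesis using root_path_nth_in_level[OF xs(1-3)] xs(5) by auto
qed

lemma root_path_avoids_level:
  assumes "walk V E xs" "distinct xs" "hd xs = rt" "length xs \<le> k"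
  shows "set xs \<inter> level k = {}"
proof -
  have "xs ! i \<notin> level k" if "i < length xs" for i
    using root_path_nth_in_level[OF assms(1-3) that] that assms(4) unfolding level_def by auto
  then show ?thesis by (auto simp: in_set_conv_nth)
qed

lemma path_extension_level:
  assumes "walk V E xs" "distinct xs" "hd xs = rt" "E (last xs) q" "q \<notin> set xs"
  shows "q \<in> level (length xs)"
  using path_snoc[OF assms(1,2,4,5)] root_path_level_last[of "xs @ [q]"] assms(1,3)
  unfolding walk_def by auto

lemma parent_unique:
  assumes "p1 \<in> level j" "p2 \<in> level j" "q \<in> level (Suc j)" "E p1 q" "E p2 q"
  shows "p1 = p2"
proof -
  obtain xs1 where xs1: "walk V E xs1" "distinct xs1" "hd xs1 = rt" "last xs1 = p1" "length xs1 = Suc j"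
    using assms(1) by (rule exists_root_path)
  obtain xs2 where xs2: "walk V E xs2" "distinct xs2" "hd xs2 = rt" "last xs2 = p2" "length xs2 = Suc j"
    using assms(2) by (rule exists_root_path)
  have "q \<notin> set xs1" "q \<notin> set xs2"
    using root_path_avoids_level[OF xs1(1-3)] root_path_avoids_level[OF xs2(1-3)] xs1(5) xs2(5) assms(3)
    by auto
  then have "xs1 @ [q] = xs2 @ [q]"
    using path_unique[of "xs1 @ [q]" "xs2 @ [q]"] path_snoc[OF xs1(1,2)] path_snoc[OF xs2(1,2)]
      xs1 xs2 assms(4,5) unfolding walk_def by auto
  then show ?thesis using xs1(4) xs2(4) by simp
qed

lemma neighbors_eq_insert_parent:
  assumes "p \<in> level (Suc m)"
  shows "\<exists>x \<in> level m. neighbors p = insert x (children p)"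
proof -
  obtain xs where xs: "walk V E xs" "distinct xs" "hd xs = rt" "last xs = p" "length xs = Suc (Suc m)"
    using assms by (rule exists_root_path)
  have last_nth: "xs ! Suc m = p" using xs(4,5) by (metis last_conv_nth diff_Suc_1 list.size(3) nat.distinct(1))
  define x where "x = xs ! m"
  have "x \<in> level m" unfolding x_def using root_path_nth_in_level[OF xs(1-3)] xs(5) by simp
  have "E x p"
    unfolding x_def using xs(1,5) last_nth by (auto simp: walk_def successively_nth)
  have "q = x" if "q \<in> neighbors p" "q \<in> set xs" for q
  proof -
    obtain i where i: "i < length xs" "xs ! i = q" using \<open>q \<in> set xs\<close> by (auto simp: in_set_conv_nth)
    have "E q p" using that(1) edge_sym unfolding neighbors_def by auto
    then have "walk V E [q, p]" "distinct [q, p]"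
      using edge_in_V edge_irrefl unfolding walk_def by auto
    moreover have "walk V E (drop i xs)" "distinct (drop i xs)"
      using walk_drop[OF xs(1) i(1)] xs(2) by auto
    ultimately have "drop i xs = [q, p]"
      using path_unique[of "drop i xs" "[q, p]"] i xs(4) by (simp add: hd_drop_conv_nth last_drop)
    then have "length xs - i = 2" by (metis length_drop length_Cons list.size(3) numeral_2_eq_2)
    then have "i = m" using xs(5) by simp
    then show ?thesis using i unfolding x_def by simp
  qed
  moreover have "q \<in> children p" if "q \<in> neighbors p" "q \<notin> set xs" for q
    using path_extension_level[OF xs(1-3)] that xs(4,5) assms
    unfolding children_def neighbors_def level_def by auto
  moreover have "x \<in> neighbors p" "children p \<subseteq> neighbors p"
    using \<open>E x p\<close> edge_sym edge_in_V unfolding neighbors_def children_def by auto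
  ultimately show ?thesis using \<open>x \<in> level m\<close> by blast
qed

lemma children_subset_level: "p \<in> level j \<Longrightarrow> children p \<subseteq> level (Suc j)"
  unfolding children_def level_def by auto

lemma degree_eq_Suc_card_children:
  assumes "p \<in> level (Suc m)"
  shows "degree V E p = (if finite (children p) then enat (Suc (card (children p))) else \<infinity>)"
proof -
  obtain x where x: "x \<in> level m" "neighbors p = insert x (children p)"
    using neighbors_eq_insert_parent[OF assms] by blast
  have "x \<notin> children p" using x(1) children_subset_level[OF assms] unfolding level_def by auto
  then show ?thesis using x(2) unfolding degree_def neighbors_def[symmetric] by simp
qed

lemma children_disjoint:
  assumes "p1 \<in> level j" "p2 \<in> level j" "p1 \<noteq> p2"
  shows "children p1 \<inter> children p2 = {}"
  using parent_unique[of p1 j p2] assms unfolding children_def neighbors_def level_def by auto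

lemma level_Suc_eq_UN_children: "level (Suc j) = (\<Union>p \<in> level j. children p)"
proof
  show "level (Suc j) \<subseteq> (\<Union>p \<in> level j. children p)"
    using parent_exists unfolding children_def neighbors_def level_def by fastforce
qed (auto simp: children_def level_def)

lemma card_eq_sum_children:
  assumes "finite (level j)" "finite F" "F \<subseteq> level (Suc j)"
  shows "card F = (\<Sum>p \<in> level j. card (F \<inter> children p))"
proof -
  have "F = (\<Union>p \<in> level j. F \<inter> children p)"
    using assms(3) level_Suc_eq_UN_children by blast
  also have "card \<dots> = (\<Sum>p \<in> level j. card (F \<inter> children p))"
    using assms(1,2) children_disjoint by (intro card_UN_disjoint) auto
  finally show ?thesis .
qed

lemma card_level_Suc_ge_double:
  assumes "finite (level (Suc m))" "finite (level (Suc (Suc m)))"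
    and "\<forall>p \<in> level (Suc m). 3 \<le> degree V E p"
  shows "2 * card (level (Suc m)) \<le> card (level (Suc (Suc m)))"
proof -
  have "2 \<le> card (level (Suc (Suc m)) \<inter> children p)" if "p \<in> level (Suc m)" for p
  proof -
    have "children p \<subseteq> level (Suc (Suc m))" using that by (rule children_subset_level)
    then have "finite (children p)" using assms(2) finite_subset by blast
    moreover have "3 \<le> degree V E p" using assms(3) that by blast
    ultimately show ?thesis
      using degree_eq_Suc_card_children[OF that] \<open>children p \<subseteq> _\<close>
      by (simp add: Int_absorb1 numeral_eq_enat)
  qed
  then have "(\<Sum>p \<in> level (Suc m). 2) \<le> (\<Sum>p \<in> level (Suc m). card (level (Suc (Suc m)) \<inter> children p))"
    by (rule sum_mono)
  then show ?thesis using card_eq_sum_children[OF assms(1,2) order_refl] by simp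
qed

lemma card_level_ge_power:
  assumes "2 \<le> card (neighbors rt)" and "\<forall>v \<in> V. v \<noteq> rt \<longrightarrow> 3 \<le> degree V E v"
    and "\<forall>k \<in> {1..n}. finite (level k)" and "1 \<le> n"
  shows "2 ^ n \<le> card (level n)"
  using assms(4,3)
proof (induction n rule: nat_induct_at_least)
  case base
  then show ?case using assms(1) level_1 by simp
next
  case (Suc k)
  have "\<forall>p \<in> level k. 3 \<le> degree V E p"
    using assms(2) root_notin_level[of k] \<open>1 \<le> k\<close> unfolding level_def by auto
  then have "2 * card (level k) \<le> card (level (Suc k))"
    using card_level_Suc_ge_double[of "k - 1"] Suc by simp
  then show ?case using Suc by simp
qed

lemma exists_last_small_level:
  assumes "finite (neighbors rt)" "2 \<le> card (neighbors rt)" "card (neighbors rt) \<le> r"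
    and "\<forall>v \<in> V. v \<noteq> rt \<longrightarrow> 3 \<le> degree V E v"
  shows "\<exists>j. 1 \<le> j \<and> j < r \<and> finite (level j) \<and> card (level j) \<le> r
             \<and> (infinite (level (Suc j)) \<or> r < card (level (Suc j)))"
proof -
  define small where "small k \<longleftrightarrow> finite (level k) \<and> card (level k) \<le> r" for k
  have small_1: "small 1" unfolding small_def level_1 using assms(1,3) by simp
  have power_bound: "2 ^ n \<le> r" if "1 \<le> n" "\<forall>k \<in> {1..n}. small k" for n
  proof -
    have "2 ^ n \<le> card (level n)"
      using card_level_ge_power[OF assms(2,4), of n] that unfolding small_def by blast
    also have "\<dots> \<le> r" using that unfolding small_def by auto
    finally show ?thesis .
  qed
  have "\<exists>k. 1 \<le> k \<and> \<not> small k"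
  proof (rule ccontr)
    assume "\<nexists>k. 1 \<le> k \<and> \<not> small k"
    then have "2 ^ r \<le> r" using power_bound[of r] assms(2,3) by auto
    then show False using less_exp[of r] by simp
  qed
  then obtain m where m: "1 \<le> m" "\<not> small m" and below: "\<And>k. k < m \<Longrightarrow> \<not> (1 \<le> k \<and> \<not> small k)"
    using exists_least_iff[of "\<lambda>k. 1 \<le> k \<and> \<not> small k"] by blast
  have "m \<noteq> 1" using m small_1 by auto
  then obtain j where j: "m = Suc j" "1 \<le> j" using m(1) by (cases m) auto
  have "\<forall>k \<in> {1..j}. small k" using below j by auto
  then have "j < r" using power_bound[of j] j(2) less_exp[of j] by linarith
  then show ?thesis using j m \<open>\<forall>k \<in> {1..j}. small k\<close> unfolding small_def by auto
qed

lemma tree_prec_same_level: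
  assumes "tree_prec V E rt p v" "gdist V E rt p = gdist V E rt v"
  shows "p = v"
proof -
  obtain xs where xs: "walk V E xs" "hd xs = rt" "last xs = v"
      "length xs = Suc (gdist V E rt v)" "p \<in> set xs"
    using assms(1) unfolding tree_prec_def by blast
  then have "distinct xs" using shortest_walk_distinct by metis
  obtain i where i: "i < length xs" "xs ! i = p" using xs(5) by (auto simp: in_set_conv_nth)
  then have "i = gdist V E rt v" using gdist_path_nth[OF xs(1) \<open>distinct xs\<close> i(1)] xs(2) assms(2) by simp
  then show ?thesis using i xs(3,4) by (metis diff_Suc_1 last_conv_nth list.size(3) nat.distinct(1))
qed

lemma covers_level: "covers V E rt (level j) j"
  unfolding covers_def
proof (intro ballI impI)
  fix u assume "u \<in> V" "j \<le> gdist V E u rt"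
  then obtain xs where xs: "walk V E xs" "distinct xs" "hd xs = rt" "last xs = u"
      "length xs = Suc (gdist V E rt u)"
    using exists_shortest_path[OF root_in_V] gdist_commute[OF root_in_V] by metis
  then have "j < length xs" using \<open>j \<le> gdist V E u rt\<close> gdist_commute[OF root_in_V \<open>u \<in> V\<close>] by simp
  then have "xs ! j \<in> level j" "tree_prec V E rt (xs ! j) u"
    using root_path_nth_in_level[OF xs(1-3)] xs unfolding tree_prec_def by auto
  then show "\<exists>p \<in> level j. tree_prec V E rt p u" by blast
qed

lemma level_perimeter:
  assumes "1 \<le> j" "finite (level j)"
  shows "perimeter V E rt (level j) \<and> perimeter_radius V E rt (level j) \<le> j"
proof -
  have "level j \<noteq> {rt}" using root_notin_level[of j] assms(1) by auto
  moreover have "p = p'" if "p \<in> level j" "p' \<in> level j" "tree_prec V E rt p p'" for p p'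
    using tree_prec_same_level that unfolding level_def by auto
  ultimately have "perimeter V E rt (level j)"
    using assms(2) covers_level unfolding perimeter_def level_def by blast
  moreover have "perimeter_radius V E rt (level j) \<le> j"
    unfolding perimeter_radius_def by (rule Least_le) (rule covers_level)
  ultimately show ?thesis by blast
qed

lemma exists_level_weights:
  assumes "1 \<le> j" "finite (level j)" "card (level j) \<le> r"
    and "infinite (level (Suc j)) \<or> r \<le> card (level (Suc j))"
    and "\<forall>p \<in> level j. 2 \<le> degree V E p"
  shows "\<exists>d. (\<forall>p \<in> level j. 0 < d p \<and> enat (d p) \<le> degree V E p - 1) \<and> (\<Sum>p \<in> level j. d p) = r"
proof -
  obtain m where m: "j = Suc m" using assms(1) by (cases j) auto
  have degree: "degree V E p = (if finite (children p) then enat (Suc (card (children p))) else \<infinity>)"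
    if "p \<in> level j" for p
    using degree_eq_Suc_card_children that m by blast
  have nonempty: "children p \<noteq> {}" if "p \<in> level j" for p
  proof
    assume "children p = {}"
    then have "degree V E p = 1" using degree[OF that] by (simp add: one_enat_def)
    moreover have "2 \<le> degree V E p" using assms(5) that by blast
    ultimately show False by simp
  qed
  define child where "child p = (SOME q. q \<in> children p)" for p
  have child: "child p \<in> children p" if "p \<in> level j" for p
    unfolding child_def using nonempty[OF that] some_in_eq by blast
  have "child ` level j \<subseteq> level (Suc j)" using child children_subset_level by blast
  moreover have "card (child ` level j) \<le> r" using card_image_le[OF assms(2)] assms(3) le_trans by blast
  ultimately have "\<exists>F. child ` level j \<subseteq> F \<and> F \<subseteq> level (Suc j) \<and> finite F \<and> card F = r"
    using assms(2,4) by (intro exists_superset_with_card) auto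
  then obtain F where F: "child ` level j \<subseteq> F" "F \<subseteq> level (Suc j)" "finite F" "card F = r"
    by blast
  define d where "d p = card (F \<inter> children p)" for p
  have "0 < d p \<and> enat (d p) \<le> degree V E p - 1" if "p \<in> level j" for p
  proof
    show "0 < d p" unfolding d_def using child[OF that] F(1,3) that by (auto simp: card_gt_0_iff)
    show "enat (d p) \<le> degree V E p - 1"
    proof (cases "finite (children p)")
      case True
      then have "d p \<le> card (children p)" unfolding d_def by (simp add: card_mono)
      then show ?thesis using True degree[OF that] by (simp add: one_enat_def)
    qed (simp add: degree[OF that])
  qed
  moreover have "(\<Sum>p \<in> level j. d p) = r"
    unfolding d_def using card_eq_sum_children[OF assms(2) F(3,2)] F(4) by simp
  ultimately show ?thesis by blast
qed

end

theorem lemma5p4: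
  fixes V :: "'a set" and E :: "'a \<Rightarrow> 'a \<Rightarrow> bool" and rt :: 'a and r :: nat
  assumes "is_tree V E" and "rt \<in> V" and "r \<ge> 3"
    and "2 \<le> degree V E rt" and "degree V E rt \<le> enat (r - 1)"
    and "\<forall>v\<in>V. v \<noteq> rt \<longrightarrow> degree V E v \<ge> 3"
  shows "\<exists>P d. perimeter V E rt P \<and> perimeter_radius V E rt P \<le> r
           \<and> (\<forall>p\<in>P. 0 < d p \<and> enat (d p) \<le> degree V E p - 1)
           \<and> (\<Sum>p\<in>P. d p) = r"
proof -
  interpret rooted_tree V E rt
    using assms(1,2) by unfold_locales
  have root_degree: "degree V E rt = enat (card (neighbors rt))" "finite (neighbors rt)"
    using assms(5) unfolding degree_def neighbors_def by (auto split: if_splits)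
  then have "2 \<le> card (neighbors rt)" "card (neighbors rt) \<le> r"
    using assms(4,5) by (auto simp: numeral_eq_enat)
  then obtain j where j: "1 \<le> j" "j < r" "finite (level j)" "card (level j) \<le> r"
      "infinite (level (Suc j)) \<or> r < card (level (Suc j))"
    using exists_last_small_level root_degree(2) assms(6) by blast
  have "\<forall>p \<in> level j. 2 \<le> degree V E p"
  proof
    fix p assume "p \<in> level j"
    then have "3 \<le> degree V E p"
      using assms(6) root_notin_level[of j] j(1) unfolding level_def by auto
    then show "2 \<le> degree V E p" by (rule order.trans[rotated]) (simp add: numeral_eq_enat)
  qed
  moreover have "infinite (level (Suc j)) \<or> r \<le> card (level (Suc j))" using j(5) by auto
  ultimately obtain d where "\<forall>p \<in> level j. 0 < d p \<and> enat (d p) \<le> degree V E p - 1"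
      "(\<Sum>p \<in> level j. d p) = r"
    using exists_level_weights[OF j(1,3,4)] by blast
  moreover have "perimeter V E rt (level j)" "perimeter_radius V E rt (level j) \<le> r"
    using level_perimeter[OF j(1,3)] j(2) by auto
  ultimately show ?thesis by blast
qed

end
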